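(* Let $X=(X_0,X_1)$ be an infinite tree of bounded valence in which every vertex has at least three neighbours, let $\Gamma<\operatorname{Aut}(X)$ be a subgroup of automorphisms such that $\Gamma\backslash X_0$ is finite, and let $p:X_0\times X_0\to[0,1]$ be a $\Gamma$-invariant transition kernel making $(X_0,p)$ an irreducible Markov chain, of finite range: there is an integer $k\geq 0$ with $p(x,y)=0$ whenever $d(x,y)>k$. Let $x,y\in X_0$ and suppose that for every integer $M\geq 0$ there exists a $p$-admissible path $(\omega_0,\dots,\omega_n)\in\mathcal{P}h(x,y;\{y\}^\complement)$ with $\max_i d(\omega_i,y)\geq M$. Then the radius of convergence $R_F(x,y)$ of the first-passage generating function $F_z(x,y)$ equals $R$.
   Context: $d$ is the graph distance on $X_0$. A $p$-admissible path is a finite sequence of vertices $(\omega_0,\dots,\omega_n)$ with $p(\omega_{i-1},\omega_i)>0$ for $1\leq i\leq n$; its weight at $z$ is $w_z(\gamma)=z^n\prod_{i=1}^n p(\omega_{i-1},\omega_i)$. $\mathcal{P}h(x,y;\{y\}^\complement)$ denotes the set of $p$-admissible paths $(\omega_0,\dots,\omega_n)$ with $\omega_0=x$, $\omega_n=y$ and $\omega_i\neq y$ for $0<i<n$. The first-passage generating function is $F_z(x,y)=\sum_{\gamma\in\mathcal{P}h(x,y;\{y\}^\complement)}w_z(\gamma)=\sum_{n\geq 0}p^{(n)}(x,y;\{y\}^\complement)z^n$, and $R_F(x,y)$ is its radius of convergence. $R$ is the radius of convergence of the Green function $G_z(x',y')=\sum_{n\geq 0}p^{(n)}(x',y')z^n$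 (where $p^{(n)}$ is the $n$-step transition probability), which by irreducibility does not depend on $x',y'$. *)

theory Defs
  imports "HOL-Analysis.Analysis"
begin

(* Graphs: vertex set X_0 is the whole type 'v, edges given by a relation E. *)

definition is_walk :: "('v \<Rightarrow> 'v \<Rightarrow> bool) \<Rightarrow> 'v list \<Rightarrow> bool" where
  "is_walk E xs \<longleftrightarrow> xs \<noteq> [] \<and> (\<forall>i. Suc i < length xs \<longrightarrow> E (xs ! i) (xs ! Suc i))"

(* a cycle: closed walk (v_0,...,v_n), n >= 3, v_0 = v_n, v_0..v_{n-1} distinct *)
definition is_cycle :: "('v \<Rightarrow> 'v \<Rightarrow> bool) \<Rightarrow> 'v list \<Rightarrow> bool" where
  "is_cycle E xs \<longleftrightarrow> is_walk E xs \<and> length xs \<ge> 4 \<and> hd xs = last xs \<and> distinct (butlast xs)"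

definition is_tree :: "('v \<Rightarrow> 'v \<Rightarrow> bool) \<Rightarrow> bool" where
  "is_tree E \<longleftrightarrow> (\<forall>x y. E x y \<longrightarrow> E y x) \<and> (\<forall>x. \<not> E x x)
     \<and> (\<forall>x y. \<exists>xs. is_walk E xs \<and> hd xs = x \<and> last xs = y)
     \<and> (\<nexists>xs. is_cycle E xs)"

definition gdist :: "('v \<Rightarrow> 'v \<Rightarrow> bool) \<Rightarrow> 'v \<Rightarrow> 'v \<Rightarrow> nat" where
  "gdist E x y = (LEAST n. \<exists>xs. is_walk E xs \<and> hd xs = x \<and> last xs = y \<and> length xs = Suc n)"

definition bounded_valence :: "('v \<Rightarrow> 'v \<Rightarrow> bool) \<Rightarrow> bool" where
  "bounded_valence E \<longleftrightarrow> (\<exists>K::nat. \<forall>x. finite {y. E x y} \<and> card {y. E x y} \<le> K)"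

definition graph_aut :: "('v \<Rightarrow> 'v \<Rightarrow> bool) \<Rightarrow> ('v \<Rightarrow> 'v) set" where
  "graph_aut E = {g. bij g \<and> (\<forall>x y. E x y \<longleftrightarrow> E (g x) (g y))}"

definition aut_subgroup :: "('v \<Rightarrow> 'v \<Rightarrow> bool) \<Rightarrow> ('v \<Rightarrow> 'v) set \<Rightarrow> bool" where
  "aut_subgroup E \<Gamma> \<longleftrightarrow> \<Gamma> \<subseteq> graph_aut E \<and> id \<in> \<Gamma>
     \<and> (\<forall>g\<in>\<Gamma>. \<forall>h\<in>\<Gamma>. g \<circ> h \<in> \<Gamma>) \<and> (\<forall>g\<in>\<Gamma>. inv g \<in> \<Gamma>)"

definition orbits :: "('v \<Rightarrow> 'v) set \<Rightarrow> 'v set set" where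
  "orbits \<Gamma> = (\<lambda>x. (\<lambda>g. g x) ` \<Gamma>) ` UNIV"

definition transition_kernel :: "('v \<Rightarrow> 'v \<Rightarrow> real) \<Rightarrow> bool" where
  "transition_kernel p \<longleftrightarrow> (\<forall>x y. 0 \<le> p x y \<and> p x y \<le> 1) \<and> (\<forall>x. (p x has_sum 1) UNIV)"

fun nstep :: "('v \<Rightarrow> 'v \<Rightarrow> real) \<Rightarrow> nat \<Rightarrow> 'v \<Rightarrow> 'v \<Rightarrow> real" where
  "nstep p 0 x y = (if x = y then 1 else 0)"
| "nstep p (Suc n) x y = (\<Sum>\<^sub>\<infinity>w. p x w * nstep p n w y)"

definition irreducible_chain :: "('v \<Rightarrow> 'v \<Rightarrow> real) \<Rightarrow> bool" where
  "irreducible_chain p \<longleftrightarrow> (\<forall>x y. \<exists>n. nstep p n x y > 0)"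

definition invariant_kernel :: "('v \<Rightarrow> 'v) set \<Rightarrow> ('v \<Rightarrow> 'v \<Rightarrow> real) \<Rightarrow> bool" where
  "invariant_kernel \<Gamma> p \<longleftrightarrow> (\<forall>g\<in>\<Gamma>. \<forall>x y. p (g x) (g y) = p x y)"

(* p-admissible path (omega_0,...,omega_n) as a nonempty list of length n+1 *)
definition admissible :: "('v \<Rightarrow> 'v \<Rightarrow> real) \<Rightarrow> 'v list \<Rightarrow> bool" where
  "admissible p \<gamma> \<longleftrightarrow> \<gamma> \<noteq> [] \<and> (\<forall>i. Suc i < length \<gamma> \<longrightarrow> p (\<gamma> ! i) (\<gamma> ! Suc i) > 0)"

definition first_passage_paths :: "('v \<Rightarrow> 'v \<Rightarrow> real) \<Rightarrow> 'v \<Rightarrow> 'v \<Rightarrow> 'v list set" where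
  "first_passage_paths p x y = {\<gamma>. admissible p \<gamma> \<and> hd \<gamma> = x \<and> last \<gamma> = y
      \<and> (\<forall>i. 0 < i \<and> Suc i < length \<gamma> \<longrightarrow> \<gamma> ! i \<noteq> y)}"

definition path_prob :: "('v \<Rightarrow> 'v \<Rightarrow> real) \<Rightarrow> 'v list \<Rightarrow> real" where
  "path_prob p \<gamma> = (\<Prod>i<length \<gamma> - 1. p (\<gamma> ! i) (\<gamma> ! Suc i))"

definition first_passage_coeff :: "('v \<Rightarrow> 'v \<Rightarrow> real) \<Rightarrow> 'v \<Rightarrow> 'v \<Rightarrow> nat \<Rightarrow> real" where
  "first_passage_coeff p x y n =
     (\<Sum>\<^sub>\<infinity>\<gamma>\<in>{\<gamma>\<in>first_passage_paths p x y. length \<gamma> = Suc n}. path_prob p \<gamma>)"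

definition RF :: "('v \<Rightarrow> 'v \<Rightarrow> real) \<Rightarrow> 'v \<Rightarrow> 'v \<Rightarrow> ereal" where
  "RF p x y = conv_radius (first_passage_coeff p x y)"

definition green_radius :: "('v \<Rightarrow> 'v \<Rightarrow> real) \<Rightarrow> 'v \<Rightarrow> 'v \<Rightarrow> ereal" where
  "green_radius p x y = conv_radius (\<lambda>n. nstep p n x y)"

end

theory Submission
  imports Defs
begin

(* R <= R_F because first-passage probabilities are bounded by n-step probabilities.
   Conversely, for r > R the terms p^(n)(x,y) r^n are unbounded, so by irreducibility every
   vertex v has some n with p^(n)(v,v) r^n > 1; as the kernel is Gamma-invariant and there are
   finitely many orbits, such an n can be chosen below a uniform bound N. By finite range k,
   the return paths of length at most N at a vertex w with d(w,y) > N k never visit y.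
   Inserting m of them into a first-passage path through such a w gives first-passage paths
   of length |gamma| + m n whose total weight times r^(|gamma| + m n) stays bounded away
   from 0, so F_r(x,y) diverges. *)

lemma conv_radius_antimono_nonneg:
  fixes a b :: "nat \<Rightarrow> real"
  assumes "\<And>n. 0 \<le> a n" "\<And>n. a n \<le> b n"
  shows "conv_radius b \<le> conv_radius a"
proof (rule conv_radius_geI_ex')
  fix r :: real assume r: "0 < r" "ereal r < conv_radius b"
  then have "summable (\<lambda>n. norm (b n * r ^ n))"
    by (intro abs_summable_in_conv_radius) simp
  then show "summable (\<lambda>n. a n * of_real r ^ n)"
  proof (rule summable_comparison_test')
    fix n
    have "0 \<le> a n" "a n \<le> b n"
      using assms by auto
    then show "norm (a n * of_real r ^ n) \<le> norm (b n * r ^ n)"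
      using r by (simp add: abs_mult mult_right_mono)
  qed
qed

lemma unbounded_beyond_conv_radius:
  fixes a :: "nat \<Rightarrow> real"
  assumes "conv_radius a < ereal r"
  shows "\<exists>n. B < norm (a n * r ^ n)"
proof (rule ccontr)
  assume "\<nexists>n. B < norm (a n * r ^ n)"
  then have bounded: "norm (a n * r ^ n) \<le> B" for n
    by (simp add: not_less)
  have "ereal r \<le> conv_radius a"
  proof (rule conv_radius_geI_ex')
    fix s assume s: "0 < s" "ereal s < ereal r"
    have "norm (a n * of_real s ^ n) \<le> B * (s / r) ^ n" for n
    proof -
      have "norm (a n * of_real s ^ n) = norm (a n * r ^ n) * (s / r) ^ n"
        using s by (simp add: abs_mult power_divide)
      then show ?thesis
        using bounded[of n] s by (simp add: mult_right_mono)
    qed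
    moreover have "summable (\<lambda>n. B * (s / r) ^ n)"
      using s by (intro summable_mult summable_geometric) simp
    ultimately show "summable (\<lambda>n. a n * of_real s ^ n)"
      by (rule summable_comparison_test'[rotated])
  qed
  then show False
    using assms by simp
qed

lemma not_summable_subseq_bounded_below:
  fixes f :: "nat \<Rightarrow> real" and J :: "nat \<Rightarrow> nat"
  assumes "0 < C" "strict_mono J" "\<And>m. C \<le> f (J m)"
  shows "\<not> summable f"
proof
  assume "summable f"
  then have "(\<lambda>m. f (J m)) \<longlonglongrightarrow> 0"
    using LIMSEQ_subseq_LIMSEQ[OF summable_LIMSEQ_zero assms(2)] by (simp add: o_def)
  then have "C \<le> 0"
    using assms(3) by (intro LIMSEQ_le_const) auto
  then show False
    using assms(1) by simp
qed

lemma is_walk_iff_successively: "is_walk E xs \<longleftrightarrow> xs \<noteq> [] \<and> successively E xs"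
  by (simp add: is_walk_def successively_conv_nth)

lemma admissible_iff_successively:
  "admissible p \<gamma> \<longleftrightarrow> \<gamma> \<noteq> [] \<and> successively (\<lambda>u v. 0 < p u v) \<gamma>"
  by (simp add: admissible_def successively_conv_nth)

lemma successively_append_tl:
  assumes "successively R xs" "successively R ys" "xs \<noteq> []" "last xs = hd ys"
  shows "successively R (xs @ tl ys)"
  using assms by (cases ys) (auto simp: successively_append_iff successively_Cons)

lemma finite_successively_lists:
  assumes "\<And>u. finite {v. R u v}"
  shows "finite {xs. successively R xs \<and> length xs = Suc n \<and> hd xs = u}"
proof (induction n arbitrary: u)
  case 0
  have "{xs. successively R xs \<and> length xs = Suc 0 \<and> hd xs = u} = {[u]}"
    by (auto simp: length_Suc_conv)
  then show ?case by simp
next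
  case (Suc n)
  let ?tails = "Sigma {v. R u v} (\<lambda>v. {xs. successively R xs \<and> length xs = Suc n \<and> hd xs = v})"
  have "{xs. successively R xs \<and> length xs = Suc (Suc n) \<and> hd xs = u} \<subseteq> (\<lambda>(v, ys). u # ys) ` ?tails"
    by (force simp: length_Suc_conv image_iff)
  moreover have "finite ?tails"
    using assms Suc.IH by blast
  ultimately show ?case
    using finite_subset by blast
qed

lemma gdist_le_walk:
  "is_walk E xs \<Longrightarrow> hd xs = a \<Longrightarrow> last xs = b \<Longrightarrow> gdist E a b \<le> length xs - 1"
  unfolding gdist_def by (rule Least_le) (auto simp: is_walk_def)

lemma gdist_self [simp]: "gdist E a a = 0"
  using gdist_le_walk[of E "[a]"] by (simp add: is_walk_def)

context
  fixes E :: "'v \<Rightarrow> 'v \<Rightarrow> bool"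
  assumes connected: "\<And>a b. \<exists>xs. is_walk E xs \<and> hd xs = a \<and> last xs = b"
begin

lemma geodesic_exists:
  obtains xs where "is_walk E xs" "hd xs = a" "last xs = b" "length xs = Suc (gdist E a b)"
proof -
  obtain xs where xs: "is_walk E xs" "hd xs = a" "last xs = b"
    using connected by blast
  then have "\<exists>n xs. is_walk E xs \<and> hd xs = a \<and> last xs = b \<and> length xs = Suc n"
    by (intro exI[of _ "length xs - 1"] exI[of _ xs]) (auto simp: is_walk_def)
  then have "\<exists>xs. is_walk E xs \<and> hd xs = a \<and> last xs = b \<and> length xs = Suc (gdist E a b)"
    unfolding gdist_def by (rule LeastI_ex)
  with that show ?thesis
    by blast
qed

lemma gdist_triangle: "gdist E a c \<le> gdist E a b + gdist E b c"
proof -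
  obtain xs where xs: "is_walk E xs" "hd xs = a" "last xs = b" "length xs = Suc (gdist E a b)"
    by (rule geodesic_exists)
  obtain ys where ys: "is_walk E ys" "hd ys = b" "last ys = c" "length ys = Suc (gdist E b c)"
    by (rule geodesic_exists)
  have "is_walk E (xs @ tl ys)"
    using xs ys by (auto simp: is_walk_iff_successively intro: successively_append_tl)
  moreover have "last (xs @ tl ys) = c"
    using xs ys by (cases ys) auto
  ultimately show ?thesis
    using gdist_le_walk[of E "xs @ tl ys" a c] xs ys by (auto simp: is_walk_def)
qed

lemma finite_gdist_ball:
  assumes "bounded_valence E"
  shows "finite {b. gdist E a b \<le> k}"
proof -
  let ?walks = "\<Union>j\<le>k. {xs. successively E xs \<and> length xs = Suc j \<and> hd xs = a}"
  have "{b. gdist E a b \<le> k} \<subseteq> last ` ?walks"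
  proof
    fix b assume "b \<in> {b. gdist E a b \<le> k}"
    moreover obtain xs where "is_walk E xs" "hd xs = a" "last xs = b" "length xs = Suc (gdist E a b)"
      by (rule geodesic_exists)
    ultimately show "b \<in> last ` ?walks"
      by (auto simp: is_walk_iff_successively)
  qed
  moreover have "finite ?walks"
    using assms by (auto simp: bounded_valence_def intro!: finite_successively_lists)
  ultimately show ?thesis
    using finite_subset by blast
qed

context
  fixes p :: "'v \<Rightarrow> 'v \<Rightarrow> real" and k :: nat
  assumes finite_range: "\<forall>u v. k < gdist E u v \<longrightarrow> p u v = 0"
begin

lemma gdist_along_admissible:
  assumes "admissible p \<gamma>" "j < length \<gamma>"
  shows "gdist E (hd \<gamma>) (\<gamma> ! j) \<le> j * k"
  using assms(2)
proof (induction j)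
  case 0
  then show ?case by (simp add: hd_conv_nth)
next
  case (Suc j)
  have "0 < p (\<gamma> ! j) (\<gamma> ! Suc j)"
    using assms(1) Suc.prems by (simp add: admissible_def)
  then have "gdist E (\<gamma> ! j) (\<gamma> ! Suc j) \<le> k"
    using finite_range by (metis less_irrefl not_le)
  then show ?case
    using gdist_triangle[where a = "hd \<gamma>" and b = "\<gamma> ! j" and c = "\<gamma> ! Suc j"] Suc by simp
qed

lemma admissible_avoids_far_vertex:
  assumes "admissible p \<gamma>" "length \<gamma> \<le> Suc n" "n * k < gdist E (hd \<gamma>) y"
  shows "y \<notin> set \<gamma>"
proof
  assume "y \<in> set \<gamma>"
  then obtain j where j: "j < length \<gamma>" "\<gamma> ! j = y"
    by (auto simp: in_set_conv_nth)
  have "gdist E (hd \<gamma>) y \<le> j * k"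
    using gdist_along_admissible[OF assms(1) j(1)] j(2) by simp
  also have "\<dots> \<le> n * k"
    using j(1) assms(2) by simp
  finally show False
    using assms(3) by simp
qed

end

end

lemma path_prob_Nil [simp]: "path_prob p [] = 1"
  by (simp add: path_prob_def)

lemma path_prob_singleton [simp]: "path_prob p [u] = 1"
  by (simp add: path_prob_def)

lemma path_prob_Cons_Cons [simp]: "path_prob p (u # v # xs) = p u v * path_prob p (v # xs)"
  unfolding path_prob_def by (simp add: prod.lessThan_Suc_shift del: prod.lessThan_Suc)

lemma path_prob_append_tl:
  "xs \<noteq> [] \<Longrightarrow> last xs = hd ys \<Longrightarrow> path_prob p (xs @ tl ys) = path_prob p xs * path_prob p ys"
proof (induction xs rule: induct_list012)
  case (2 u)
  then show ?case by (cases ys) auto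
qed auto

lemma path_prob_take_drop:
  assumes "i < length \<gamma>"
  shows "path_prob p \<gamma> = path_prob p (take (Suc i) \<gamma>) * path_prob p (drop i \<gamma>)"
proof -
  have "path_prob p (take (Suc i) \<gamma> @ tl (drop i \<gamma>))
      = path_prob p (take (Suc i) \<gamma>) * path_prob p (drop i \<gamma>)"
    using assms by (intro path_prob_append_tl) (simp_all add: take_Suc_conv_app_nth hd_drop_conv_nth)
  then show ?thesis
    by (simp add: tl_drop flip: drop_Suc)
qed

lemma nstep_bij_invariant:
  assumes "bij g" "\<And>u v. p (g u) (g v) = p u v"
  shows "nstep p n (g u) (g v) = nstep p n u v"
proof (induction n arbitrary: u)
  case 0
  then show ?case using assms(1) by (auto simp: bij_def inj_eq)
next
  case (Suc n)
  have "nstep p (Suc n) (g u) (g v) = (\<Sum>\<^sub>\<infinity>w. p (g u) (g w) * nstep p n (g w) (g v))"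
    using infsum_reindex_bij_betw[of g UNIV UNIV "\<lambda>w. p (g u) w * nstep p n w (g v)"] assms(1)
    by (simp add: bij_betw_def bij_def)
  also have "\<dots> = nstep p (Suc n) u v"
    by (simp add: assms(2) Suc)
  finally show ?case .
qed

definition admissible_paths :: "('v \<Rightarrow> 'v \<Rightarrow> real) \<Rightarrow> nat \<Rightarrow> 'v \<Rightarrow> 'v \<Rightarrow> 'v list set" where
  "admissible_paths p n u v = {\<gamma>. admissible p \<gamma> \<and> length \<gamma> = Suc n \<and> hd \<gamma> = u \<and> last \<gamma> = v}"

lemma admissible_paths_0: "admissible_paths p 0 u v = (if u = v then {[u]} else {})"
  by (auto simp: admissible_paths_def length_Suc_conv admissible_def)

lemma admissible_paths_Suc:
  "admissible_paths p (Suc n) u v =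
     (\<lambda>(w, \<gamma>). u # \<gamma>) ` Sigma {w. 0 < p u w} (\<lambda>w. admissible_paths p n w v)"
  by (force simp: admissible_paths_def admissible_iff_successively length_Suc_conv
      successively_Cons image_iff)

lemma append_tl_in_admissible_paths:
  assumes "s \<in> admissible_paths p a u w" "t \<in> admissible_paths p b w v"
  shows "s @ tl t \<in> admissible_paths p (a + b) u v"
proof -
  have "t \<noteq> []" "last s = hd t"
    and "successively (\<lambda>u v. 0 < p u v) (s @ tl t)"
    using assms by (auto simp: admissible_paths_def admissible_iff_successively
        intro: successively_append_tl)
  then show ?thesis
    using assms by (cases t) (auto simp: admissible_paths_def admissible_iff_successively)
qed

lemma first_passage_paths_subset_admissible_paths:
  "{\<gamma> \<in> first_passage_paths p x y. length \<gamma> = Suc n} \<subseteq> admissible_paths p n x y"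
  by (auto simp: first_passage_paths_def admissible_paths_def)

definition avoiding_paths :: "('v \<Rightarrow> 'v \<Rightarrow> real) \<Rightarrow> 'v \<Rightarrow> nat \<Rightarrow> 'v \<Rightarrow> 'v \<Rightarrow> 'v list set" where
  "avoiding_paths p y n u v =
     {\<gamma> \<in> admissible_paths p n u v. \<forall>j. 0 < j \<and> j < length \<gamma> \<longrightarrow> \<gamma> ! j \<noteq> y}"

lemma take_Suc_in_avoiding_paths:
  assumes "\<gamma> \<in> first_passage_paths p x y" "Suc i < length \<gamma>"
  shows "take (Suc i) \<gamma> \<in> avoiding_paths p y i x (\<gamma> ! i)"
  using assms by (auto simp: first_passage_paths_def avoiding_paths_def admissible_paths_def
      admissible_iff_successively successively_conv_nth hd_conv_nth last_conv_nth)

locale locally_finite_kernel =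
  fixes p :: "'v \<Rightarrow> 'v \<Rightarrow> real"
  assumes nonneg: "\<And>u v. 0 \<le> p u v"
    and finite_support: "\<And>u. finite {v. 0 < p u v}"
begin

lemma finite_admissible_paths: "finite (admissible_paths p n u v)"
proof (rule finite_subset)
  show "admissible_paths p n u v \<subseteq> {xs. successively (\<lambda>a b. 0 < p a b) xs \<and> length xs = Suc n \<and> hd xs = u}"
    by (auto simp: admissible_paths_def admissible_iff_successively)
qed (intro finite_successively_lists finite_support)

lemma path_prob_nonneg: "0 \<le> path_prob p \<gamma>"
  unfolding path_prob_def by (intro prod_nonneg) (simp add: nonneg)

lemma path_prob_pos: "admissible p \<gamma> \<Longrightarrow> 0 < path_prob p \<gamma>"
  unfolding path_prob_def admissible_def by (intro prod_pos) auto

lemma nstep_eq_sum_paths: "nstep p n u v = (\<Sum>\<gamma>\<in>admissible_paths p n u v. path_prob p \<gamma>)"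
proof (induction n arbitrary: u)
  case 0
  then show ?case by (simp add: admissible_paths_0)
next
  case (Suc n)
  let ?S = "{w. 0 < p u w}"
  have "nstep p (Suc n) u v = (\<Sum>\<^sub>\<infinity>w\<in>?S. p u w * nstep p n w v)"
    by (simp, rule infsum_cong_neutral) (use nonneg in \<open>auto simp: order_less_le\<close>)
  also have "\<dots> = (\<Sum>w\<in>?S. \<Sum>\<gamma>\<in>admissible_paths p n w v. path_prob p (u # \<gamma>))"
    using finite_support
    by (auto simp: Suc sum_distrib_left admissible_paths_def admissible_def neq_Nil_conv
        intro!: sum.cong)
  also have "\<dots> = (\<Sum>(w, \<gamma>)\<in>Sigma ?S (\<lambda>w. admissible_paths p n w v). path_prob p (u # \<gamma>))"
    by (rule sum.Sigma) (auto simp: finite_support finite_admissible_paths)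
  also have "\<dots> = (\<Sum>\<gamma>\<in>admissible_paths p (Suc n) u v. path_prob p \<gamma>)"
    unfolding admissible_paths_Suc
    by (subst sum.reindex) (auto simp: inj_on_def admissible_paths_def case_prod_unfold)
  finally show ?case .
qed

lemma nstep_nonneg: "0 \<le> nstep p n u v"
  unfolding nstep_eq_sum_paths by (intro sum_nonneg path_prob_nonneg)

lemma sum_path_prob_concat_le:
  assumes S: "S \<subseteq> admissible_paths p a u w" and T: "T \<subseteq> admissible_paths p b w v"
    and U: "U \<subseteq> admissible_paths p (a + b) u v"
    and concat: "\<And>s t. s \<in> S \<Longrightarrow> t \<in> T \<Longrightarrow> s @ tl t \<in> U"
  shows "(\<Sum>s\<in>S. path_prob p s) * (\<Sum>t\<in>T. path_prob p t) \<le> (\<Sum>\<gamma>\<in>U. path_prob p \<gamma>)"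
proof -
  have fin: "finite S" "finite T" "finite U"
    using S T U finite_admissible_paths finite_subset by blast+
  have inj: "inj_on (\<lambda>(s, t). s @ tl t) (S \<times> T)"
  proof (clarsimp simp: inj_on_def)
    fix s t s' t' assume st: "s \<in> S" "t \<in> T" "s' \<in> S" "t' \<in> T" "s @ tl t = s' @ tl t'"
    have "length s = length s'"
      using subsetD[OF S st(1)] subsetD[OF S st(3)] by (simp add: admissible_paths_def)
    then have "s = s'" "tl t = tl t'"
      using st(5) by auto
    moreover have "hd t = hd t'" "t \<noteq> []" "t' \<noteq> []"
      using T st by (auto simp: admissible_paths_def admissible_def)
    ultimately show "s = s' \<and> t = t'"
      by (metis list.collapse)
  qed
  have "(\<Sum>s\<in>S. path_prob p s) * (\<Sum>t\<in>T. path_prob p t) = (\<Sum>(s, t)\<in>S \<times> T. path_prob p (s @ tl t))"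
    unfolding sum_product sum.cartesian_product
  proof (intro sum.cong refl, clarify)
    fix s t assume "s \<in> S" "t \<in> T"
    then have "s \<in> admissible_paths p a u w" "t \<in> admissible_paths p b w v"
      using S T by blast+
    then show "path_prob p s * path_prob p t = path_prob p (s @ tl t)"
      by (simp add: admissible_paths_def admissible_def path_prob_append_tl)
  qed
  also have "\<dots> = (\<Sum>\<gamma>\<in>(\<lambda>(s, t). s @ tl t) ` (S \<times> T). path_prob p \<gamma>)"
    using sum.reindex[OF inj, of "path_prob p"] by (simp add: case_prod_unfold o_def)
  also have "\<dots> \<le> (\<Sum>\<gamma>\<in>U. path_prob p \<gamma>)"
    using fin concat by (intro sum_mono2) (auto simp: path_prob_nonneg)
  finally show ?thesis .
qed

lemma nstep_mult_le_nstep_add: "nstep p a u w * nstep p b w v \<le> nstep p (a + b) u v"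
  unfolding nstep_eq_sum_paths
  by (intro sum_path_prob_concat_le append_tl_in_admissible_paths) auto

lemma first_passage_coeff_eq_sum:
  "first_passage_coeff p x y n = (\<Sum>\<gamma>\<in>{\<gamma> \<in> first_passage_paths p x y. length \<gamma> = Suc n}. path_prob p \<gamma>)"
  using finite_subset[OF first_passage_paths_subset_admissible_paths finite_admissible_paths]
  by (simp add: first_passage_coeff_def)

lemma first_passage_coeff_nonneg: "0 \<le> first_passage_coeff p x y n"
  unfolding first_passage_coeff_eq_sum by (intro sum_nonneg path_prob_nonneg)

lemma first_passage_coeff_le_nstep: "first_passage_coeff p x y n \<le> nstep p n x y"
  unfolding first_passage_coeff_eq_sum nstep_eq_sum_paths
  by (rule sum_mono2[OF finite_admissible_paths first_passage_paths_subset_admissible_paths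
        path_prob_nonneg])

lemma return_weight_exceeds_one:
  assumes irr: "irreducible_chain p" and "0 < r"
    and unbounded: "\<And>B. \<exists>n. B < nstep p n x y * r ^ n"
  shows "\<exists>n. 1 < nstep p n v v * r ^ n"
proof -
  obtain a b where a: "0 < nstep p a v x" and b: "0 < nstep p b y v"
    using irr by (meson irreducible_chain_def)
  define c where "c = nstep p a v x * r ^ a * (nstep p b y v * r ^ b)"
  have "0 < c"
    using a b \<open>0 < r\<close> by (simp add: c_def)
  obtain n where n: "1 / c < nstep p n x y * r ^ n"
    using unbounded by blast
  have "1 < c * (nstep p n x y * r ^ n)"
    using n \<open>0 < c\<close> by (simp add: field_simps)
  also have "\<dots> = nstep p a v x * nstep p n x y * nstep p b y v * r ^ (a + n + b)"
    by (simp add: c_def power_add algebra_simps)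
  also have "\<dots> \<le> nstep p (a + n + b) v v * r ^ (a + n + b)"
    using \<open>0 < r\<close>
    by (intro mult_right_mono order_trans[OF mult_right_mono nstep_mult_le_nstep_add]
        nstep_mult_le_nstep_add nstep_nonneg) simp_all
  finally show ?thesis ..
qed

lemma sum_avoiding_paths_mult_loops_le:
  assumes loops: "\<And>l. l \<in> admissible_paths p n w w \<Longrightarrow> y \<notin> set l"
  shows "(\<Sum>d\<in>avoiding_paths p y a x w. path_prob p d) * nstep p n w w
           \<le> (\<Sum>d\<in>avoiding_paths p y (a + n) x w. path_prob p d)"
  unfolding nstep_eq_sum_paths
proof (rule sum_path_prob_concat_le)
  fix d l assume d: "d \<in> avoiding_paths p y a x w" and l: "l \<in> admissible_paths p n w w"
  have "y \<notin> set (tl l)"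
    using loops[OF l] by (cases l) auto
  with d show "d @ tl l \<in> avoiding_paths p y (a + n) x w"
    using append_tl_in_admissible_paths[OF _ l, of d a x]
    by (auto simp: avoiding_paths_def nth_append dest!: nth_mem)
qed (auto simp: avoiding_paths_def)

lemma sum_avoiding_paths_mult_suffix_le:
  assumes \<gamma>: "\<gamma> \<in> first_passage_paths p x y" and i: "Suc i < length \<gamma>"
  shows "(\<Sum>d\<in>avoiding_paths p y a x (\<gamma> ! i). path_prob p d) * path_prob p (drop i \<gamma>)
           \<le> first_passage_coeff p x y (a + (length \<gamma> - 1 - i))"
proof -
  let ?J = "a + (length \<gamma> - 1 - i)"
  have suf: "drop i \<gamma> \<in> admissible_paths p (length \<gamma> - 1 - i) (\<gamma> ! i) y"
    using \<gamma> i by (auto simp: first_passage_paths_def admissible_paths_def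
        admissible_iff_successively hd_drop_conv_nth successively_conv_nth)
  have "(\<Sum>d\<in>avoiding_paths p y a x (\<gamma> ! i). path_prob p d) * (\<Sum>s\<in>{drop i \<gamma>}. path_prob p s)
      \<le> (\<Sum>\<delta>\<in>{\<delta> \<in> first_passage_paths p x y. length \<delta> = Suc ?J}. path_prob p \<delta>)"
  proof (rule sum_path_prob_concat_le)
    fix d s assume d: "d \<in> avoiding_paths p y a x (\<gamma> ! i)" and "s \<in> {drop i \<gamma>}"
    then have s: "tl s = drop (Suc i) \<gamma>"
      by (simp add: tl_drop flip: drop_Suc)
    have "(d @ tl s) ! j \<noteq> y" if "0 < j" "Suc j < length (d @ tl s)" for j
    proof (cases "j < length d")
      case True
      then show ?thesis
        using d that by (simp add: avoiding_paths_def nth_append)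
    next
      case False
      then have "(d @ tl s) ! j = \<gamma> ! (Suc i + (j - length d))"
        using that i by (simp add: nth_append s)
      moreover have "Suc (Suc i + (j - length d)) < length \<gamma>"
        using that False i by (simp add: s)
      ultimately show ?thesis
        using \<gamma> by (simp add: first_passage_paths_def)
    qed
    moreover have "d @ tl s \<in> admissible_paths p ?J x y"
      using append_tl_in_admissible_paths[OF _ suf, of d a x] d \<open>s \<in> {drop i \<gamma>}\<close>
      by (simp add: avoiding_paths_def)
    ultimately show "d @ tl s \<in> {\<delta> \<in> first_passage_paths p x y. length \<delta> = Suc ?J}"
      by (auto simp: first_passage_paths_def admissible_paths_def)
  qed (use suf first_passage_paths_subset_admissible_paths[of p x y ?J]
      in \<open>auto simp: avoiding_paths_def\<close>)
  then show ?thesis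
    by (simp add: first_passage_coeff_eq_sum)
qed

lemma first_passage_coeff_pumping:
  assumes \<gamma>: "\<gamma> \<in> first_passage_paths p x y" and i: "Suc i < length \<gamma>"
    and loops: "\<And>l. l \<in> admissible_paths p n (\<gamma> ! i) (\<gamma> ! i) \<Longrightarrow> y \<notin> set l"
  shows "path_prob p \<gamma> * nstep p n (\<gamma> ! i) (\<gamma> ! i) ^ m
           \<le> first_passage_coeff p x y (length \<gamma> - 1 + m * n)"
proof -
  define w where "w = \<gamma> ! i"
  have loops_w: "\<And>l. l \<in> admissible_paths p n w w \<Longrightarrow> y \<notin> set l"
    using loops by (simp add: w_def)
  have pumped: "path_prob p (take (Suc i) \<gamma>) * nstep p n w w ^ m
      \<le> (\<Sum>d\<in>avoiding_paths p y (i + m * n) x w. path_prob p d)" for m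
  proof (induction m)
    case 0
    have "finite (avoiding_paths p y i x w)"
      by (rule finite_subset[OF _ finite_admissible_paths]) (auto simp: avoiding_paths_def)
    moreover have "take (Suc i) \<gamma> \<in> avoiding_paths p y i x w"
      using take_Suc_in_avoiding_paths[OF \<gamma> i] by (simp add: w_def)
    ultimately show ?case
      by (simp add: member_le_sum path_prob_nonneg)
  next
    case (Suc m)
    have "path_prob p (take (Suc i) \<gamma>) * nstep p n w w ^ Suc m
        \<le> (\<Sum>d\<in>avoiding_paths p y (i + m * n) x w. path_prob p d) * nstep p n w w"
      unfolding power_Suc2 mult.assoc[symmetric] by (rule mult_right_mono[OF Suc.IH nstep_nonneg])
    also have "\<dots> \<le> (\<Sum>d\<in>avoiding_paths p y (i + Suc m * n) x w. path_prob p d)"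
      using sum_avoiding_paths_mult_loops_le[of n w y "i + m * n" x, OF loops_w] by (simp add: ac_simps)
    finally show ?case .
  qed
  have "path_prob p \<gamma> * nstep p n w w ^ m
      = path_prob p (take (Suc i) \<gamma>) * nstep p n w w ^ m * path_prob p (drop i \<gamma>)"
    using path_prob_take_drop[of i \<gamma> p] i by simp
  also have "\<dots> \<le> (\<Sum>d\<in>avoiding_paths p y (i + m * n) x w. path_prob p d) * path_prob p (drop i \<gamma>)"
    by (rule mult_right_mono[OF pumped path_prob_nonneg])
  also have "\<dots> \<le> first_passage_coeff p x y (length \<gamma> - 1 + m * n)"
    using sum_avoiding_paths_mult_suffix_le[OF \<gamma> i, of "i + m * n"] i by (simp add: w_def ac_simps)
  finally show ?thesis
    by (simp add: w_def)
qed

lemma not_summable_first_passage_coeff: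
  assumes connected: "\<And>a b. \<exists>xs. is_walk E xs \<and> hd xs = a \<and> last xs = b"
    and finite_range: "\<forall>u v. k < gdist E u v \<longrightarrow> p u v = 0"
    and "0 < r"
    and returns: "\<forall>w. \<exists>n\<le>N. 1 < nstep p n w w * r ^ n"
    and far: "\<forall>M. \<exists>\<gamma>\<in>first_passage_paths p x y. \<exists>i<length \<gamma>. M \<le> gdist E (\<gamma> ! i) y"
  shows "\<not> summable (\<lambda>n. first_passage_coeff p x y n * r ^ n)"
proof -
  obtain \<gamma> i where \<gamma>: "\<gamma> \<in> first_passage_paths p x y" and "i < length \<gamma>"
    and far_i: "Suc (N * k) \<le> gdist E (\<gamma> ! i) y"
    using far by blast
  define w where "w = \<gamma> ! i"
  obtain n where "n \<le> N" and n: "1 < nstep p n w w * r ^ n"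
    using returns by blast
  have "0 < n"
    using n by (cases n) auto
  have "\<gamma> ! i \<noteq> last \<gamma>"
    using \<gamma> far_i by (auto simp: first_passage_paths_def)
  then have i: "Suc i < length \<gamma>"
    using \<open>i < length \<gamma>\<close> by (metis Suc_lessI diff_Suc_1 last_conv_nth list.size(3) not_less0)
  have "n * k \<le> N * k"
    using \<open>n \<le> N\<close> by simp
  then have "n * k < gdist E w y"
    using far_i unfolding w_def by linarith
  then have loops_avoid: "y \<notin> set l" if "l \<in> admissible_paths p n w w" for l
    using admissible_avoids_far_vertex[OF connected finite_range, of l n y] that
    by (simp add: admissible_paths_def)
  define J where "J m = length \<gamma> - 1 + m * n" for m
  define C where "C = path_prob p \<gamma> * r ^ (length \<gamma> - 1)"
  have "0 < C"
    using \<gamma> \<open>0 < r\<close> by (simp add: C_def first_passage_paths_def path_prob_pos)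
  moreover have "C \<le> first_passage_coeff p x y (J m) * r ^ J m" for m
  proof -
    have "C \<le> C * (nstep p n w w * r ^ n) ^ m"
      using \<open>0 < C\<close> n by simp
    also have "\<dots> = path_prob p \<gamma> * nstep p n w w ^ m * r ^ J m"
      by (simp add: C_def J_def power_add power_mult_distrib mult.commute[of m n]
          flip: power_mult)
    also have "\<dots> \<le> first_passage_coeff p x y (J m) * r ^ J m"
      using first_passage_coeff_pumping[OF \<gamma> i loops_avoid[unfolded w_def]] \<open>0 < r\<close>
      by (intro mult_right_mono) (simp_all add: J_def w_def)
    finally show ?thesis .
  qed
  moreover have "strict_mono J"
    using \<open>0 < n\<close> by (simp add: J_def strict_mono_def)
  ultimately show ?thesis
    by (intro not_summable_subseq_bounded_below[of C J])
qed

end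

lemma orbits_uniform_bound:
  fixes P :: "nat \<Rightarrow> 'v \<Rightarrow> bool"
  assumes "finite (orbits \<Gamma>)" "id \<in> \<Gamma>"
    and exists: "\<And>v. \<exists>n. P n v"
    and invariant: "\<And>g n v. g \<in> \<Gamma> \<Longrightarrow> P n v \<Longrightarrow> P n (g v)"
  shows "\<exists>N. \<forall>w. \<exists>n\<le>N. P n w"
proof -
  define orbit where "orbit w = (\<lambda>g. g w) ` \<Gamma>" for w
  define rep where "rep A = (SOME v. orbit v = A)" for A
  define f where "f v = (SOME n. P n v)" for v
  define N where "N = Max ((\<lambda>A. f (rep A)) ` orbits \<Gamma>)"
  have "\<exists>n\<le>N. P n w" for w
  proof -
    define v where "v = rep (orbit w)"
    have "orbit v = orbit w"
      unfolding v_def rep_def by (rule someI[of _ w]) simp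
    moreover have "w \<in> orbit w"
      using \<open>id \<in> \<Gamma>\<close> unfolding orbit_def by (rule rev_image_eqI) simp
    ultimately obtain g where "g \<in> \<Gamma>" "w = g v"
      unfolding orbit_def by auto
    moreover have "P (f v) v"
      unfolding f_def using exists by (rule someI_ex)
    moreover have "f v \<le> N"
      unfolding N_def v_def using assms(1) by (intro Max_ge) (auto simp: orbits_def orbit_def)
    ultimately show ?thesis
      using invariant by blast
  qed
  then show ?thesis
    by blast
qed

lemma (in locally_finite_kernel) uniform_return_weight_exceeds_one:
  assumes "irreducible_chain p" and grp: "aut_subgroup E \<Gamma>" and "finite (orbits \<Gamma>)"
    and inv: "invariant_kernel \<Gamma> p" and "0 < r"
    and "\<And>B. \<exists>n. B < nstep p n x y * r ^ n"
  shows "\<exists>N. \<forall>w. \<exists>n\<le>N. 1 < nstep p n w w * r ^ n"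
proof (rule orbits_uniform_bound[where P = "\<lambda>n v. 1 < nstep p n v v * r ^ n"])
  show "\<exists>n. 1 < nstep p n v v * r ^ n" for v
    using return_weight_exceeds_one assms by blast
  show "1 < nstep p n (g v) (g v) * r ^ n" if "g \<in> \<Gamma>" "1 < nstep p n v v * r ^ n" for g n v
    using that grp inv nstep_bij_invariant[of g p n v v]
    by (auto simp: aut_subgroup_def graph_aut_def invariant_kernel_def)
qed (use assms in \<open>simp_all add: aut_subgroup_def\<close>)

theorem proposition3p8:
  fixes E :: "'v \<Rightarrow> 'v \<Rightarrow> bool"
    and \<Gamma> :: "('v \<Rightarrow> 'v) set"
    and p :: "'v \<Rightarrow> 'v \<Rightarrow> real"
    and x y :: 'v
  assumes tree: "is_tree E"
    and inf: "infinite (UNIV :: 'v set)"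
    and bv: "bounded_valence E"
    and deg3: "\<forall>v. card {w. E v w} \<ge> 3"
    and grp: "aut_subgroup E \<Gamma>"
    and cofinite: "finite (orbits \<Gamma>)"
    and kernel: "transition_kernel p"
    and inv: "invariant_kernel \<Gamma> p"
    and irr: "irreducible_chain p"
    and finrange: "\<exists>k::nat. \<forall>u v. gdist E u v > k \<longrightarrow> p u v = 0"
    and far: "\<forall>M::nat. \<exists>\<gamma>\<in>first_passage_paths p x y.
                 \<exists>i<length \<gamma>. gdist E (\<gamma> ! i) y \<ge> M"
  shows "RF p x y = green_radius p x y"
proof -
  obtain k :: nat where finite_range: "\<forall>u v. k < gdist E u v \<longrightarrow> p u v = 0"
    using finrange by blast
  have connected: "\<And>a b. \<exists>xs. is_walk E xs \<and> hd xs = a \<and> last xs = b"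
    using tree by (simp add: is_tree_def)
  interpret locally_finite_kernel p
  proof
    show "0 \<le> p u v" for u v
      using kernel by (simp add: transition_kernel_def)
    show "finite {v. 0 < p u v}" for u
      using finite_range
      by (intro finite_subset[OF _ finite_gdist_ball[OF connected bv, of u k]])
        (auto simp flip: not_less)
  qed
  have "green_radius p x y \<le> RF p x y"
    unfolding RF_def green_radius_def
    by (intro conv_radius_antimono_nonneg first_passage_coeff_nonneg first_passage_coeff_le_nstep)
  moreover have "RF p x y \<le> green_radius p x y"
    unfolding RF_def
  proof (rule conv_radius_leI_ex')
    fix r :: real assume r: "0 < r" "green_radius p x y < ereal r"
    then have "\<exists>n. B < nstep p n x y * r ^ n" for B
      using unbounded_beyond_conv_radius[of "\<lambda>n. nstep p n x y" r B] nstep_nonneg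
      by (simp add: green_radius_def)
    then obtain N where "\<forall>w. \<exists>n\<le>N. 1 < nstep p n w w * r ^ n"
      using uniform_return_weight_exceeds_one[OF irr grp cofinite inv r(1)] by blast
    then show "\<not> summable (\<lambda>n. first_passage_coeff p x y n * of_real r ^ n)"
      using not_summable_first_passage_coeff[OF connected finite_range r(1)] far by auto
  qed (simp add: green_radius_def conv_radius_nonneg)
  ultimately show ?thesis
    by (rule antisym[rotated])
qed

end
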